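(* Let $G=(m,n,\boldsymbol{c},\boldsymbol{d},r_{\max},r_{\min})$ be an interbank lending game, let $g(\boldsymbol{s})=(\nabla_1u_1(\boldsymbol{s}),\dots,\nabla_mu_m(\boldsymbol{s}))\in\mathbb{R}^{mn}$ be its $\boldsymbol{1}$-pseudo-gradient, and let $\nabla g(\boldsymbol{s})$ be the $mn\times mn$ Jacobian matrix of $g$ at $\boldsymbol{s}$. Then for every strategy profile $\boldsymbol{s}$, the matrix $\nabla g(\boldsymbol{s})+(\nabla g(\boldsymbol{s}))^\top$ is negative definite.
   Context: An interbank lending game $G=(m,n,\boldsymbol{c},\boldsymbol{d},r_{\max},r_{\min})$ consists of positive integers $m,n$, budgets $\boldsymbol{c}\in\mathbb{R}_{>0}^m$, demands $\boldsymbol{d}\in\mathbb{R}_{>0}^n$ and reals $0<r_{\min}<r_{\max}$. Lenders are $L=\{1,\dots,m\}$, borrowers $B=\{1,\dots,n\}$. Lender $i$'s strategy set is $S_i=\{s_i\in\mathbb{R}_{\ge0}^n:\sum_{j\in B}s_{ij}\le c_i\}$, the strategy space is $\boldsymbol{S}=\prod_{i\in L}S_i$ with elements $\boldsymbol{s}=(s_{ij})_{i\in L,j\in B}$, $s_i=(s_{i1},\dots,s_{in})$. The interest rate of borrower $j$ is $r_j(\boldsymbol{s})=(r_{\min}-r_{\max})\frac{\sum_{i\in L}s_{ij}}{d_j}+r_{\max}$ and lender $i$'s utility is $u_i(\boldsymbol{s})=\sum_{j\in B}(r_j(\boldsymbol{s})-r_{\min})s_{ij}$ (a polynomial in $\boldsymbol{s}$).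 $\nabla_iu_i(\boldsymbol{s})\in\mathbb{R}^n$ denotes the gradient of $u_i$ with respect to lender $i$'s own variables $s_i$. *)

theory Defs
  imports "HOL-Analysis.Analysis"
begin

text \<open>Lenders are indexed by 1..m, borrowers by 1..n. A strategy profile is a
function s :: nat => nat => real, with s i j the amount lender i lends to borrower j.\<close>

definition interbank_game ::
  "nat \<Rightarrow> nat \<Rightarrow> (nat \<Rightarrow> real) \<Rightarrow> (nat \<Rightarrow> real) \<Rightarrow> real \<Rightarrow> real \<Rightarrow> bool" where
  "interbank_game m n c d rmax rmin \<longleftrightarrow>
     0 < m \<and> 0 < n \<and> (\<forall>i\<in>{1..m}. 0 < c i) \<and> (\<forall>j\<in>{1..n}. 0 < d j)
     \<and> 0 < rmin \<and> rmin < rmax"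

definition strategy_space ::
  "nat \<Rightarrow> nat \<Rightarrow> (nat \<Rightarrow> real) \<Rightarrow> (nat \<Rightarrow> nat \<Rightarrow> real) set" where
  "strategy_space m n c =
     {s. \<forall>i\<in>{1..m}. (\<forall>j\<in>{1..n}. 0 \<le> s i j) \<and> (\<Sum>j=1..n. s i j) \<le> c i}"

definition interest_rate ::
  "nat \<Rightarrow> (nat \<Rightarrow> real) \<Rightarrow> real \<Rightarrow> real \<Rightarrow> (nat \<Rightarrow> nat \<Rightarrow> real) \<Rightarrow> nat \<Rightarrow> real" where
  "interest_rate m d rmax rmin s j = (rmin - rmax) * (\<Sum>i=1..m. s i j) / d j + rmax"

definition utility ::
  "nat \<Rightarrow> nat \<Rightarrow> (nat \<Rightarrow> real) \<Rightarrow> real \<Rightarrow> real \<Rightarrow> (nat \<Rightarrow> nat \<Rightarrow> real) \<Rightarrow> nat \<Rightarrow> real" where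
  "utility m n d rmax rmin s i = (\<Sum>j=1..n. (interest_rate m d rmax rmin s j - rmin) * s i j)"

definition upd_profile :: "(nat \<Rightarrow> nat \<Rightarrow> real) \<Rightarrow> nat \<Rightarrow> nat \<Rightarrow> real \<Rightarrow> (nat \<Rightarrow> nat \<Rightarrow> real)" where
  "upd_profile s k l t = s(k := (s k)(l := t))"

definition pseudo_gradient ::
  "nat \<Rightarrow> nat \<Rightarrow> (nat \<Rightarrow> real) \<Rightarrow> real \<Rightarrow> real \<Rightarrow> (nat \<Rightarrow> nat \<Rightarrow> real) \<Rightarrow> nat \<times> nat \<Rightarrow> real" where
  "pseudo_gradient m n d rmax rmin s p =
     (case p of (i, j) \<Rightarrow> deriv (\<lambda>t. utility m n d rmax rmin (upd_profile s i j t) i) (s i j))"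

definition pg_jacobian ::
  "nat \<Rightarrow> nat \<Rightarrow> (nat \<Rightarrow> real) \<Rightarrow> real \<Rightarrow> real \<Rightarrow> (nat \<Rightarrow> nat \<Rightarrow> real) \<Rightarrow> nat \<times> nat \<Rightarrow> nat \<times> nat \<Rightarrow> real" where
  "pg_jacobian m n d rmax rmin s p q =
     (case q of (k, l) \<Rightarrow> deriv (\<lambda>t. pseudo_gradient m n d rmax rmin (upd_profile s k l t) p) (s k l))"

definition negative_definite :: "'a set \<Rightarrow> ('a \<Rightarrow> 'a \<Rightarrow> real) \<Rightarrow> bool" where
  "negative_definite I M \<longleftrightarrow>
     (\<forall>x. (\<exists>p\<in>I. x p \<noteq> 0) \<longrightarrow> (\<Sum>p\<in>I. \<Sum>q\<in>I. x p * M p q * x q) < 0)"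

end

theory Submission
  imports Defs
begin

(* The pseudo-gradient is affine in the profile: g_ij = r_j - rmin - (rmax - rmin) s_ij / d_j.
   Its Jacobian is therefore constant, and it couples (i,j) only with the entries (k,j) of the
   same borrower, with weight -(rmax - rmin)/d_j, doubled on the diagonal. Writing
   T_j = sum_i x_ij, the quadratic form of the symmetrised Jacobian at x is
   -2 (rmax - rmin) sum_j (T_j^2 + sum_i x_ij^2) / d_j, which is negative for x \<noteq> 0. *)

lemma negative_definite_cong:
  assumes "\<And>p q. p \<in> I \<Longrightarrow> q \<in> I \<Longrightarrow> M p q = M' p q"
  shows "negative_definite I M \<longleftrightarrow> negative_definite I M'"
  unfolding negative_definite_def using assms by (simp cong: sum.cong)

(* For each column j, the block w_j (E + Id) with E the all-ones matrix; distinct columns are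
   uncoupled. *)
definition column_coupling :: "('b \<Rightarrow> real) \<Rightarrow> 'a \<times> 'b \<Rightarrow> 'a \<times> 'b \<Rightarrow> real" where
  "column_coupling w p q =
     (if snd p = snd q then w (snd p) * (if fst p = fst q then 2 else 1) else 0)"

lemma quadratic_form_column_coupling:
  assumes "finite I" and "finite J"
  shows "(\<Sum>p\<in>I \<times> J. \<Sum>q\<in>I \<times> J. x p * column_coupling w p q * x q) =
     (\<Sum>j\<in>J. w j * ((\<Sum>i\<in>I. x (i, j))\<^sup>2 + (\<Sum>i\<in>I. (x (i, j))\<^sup>2)))"
proof -
  have row: "(\<Sum>q\<in>I \<times> J. x (i, j) * column_coupling w (i, j) q * x q) =
      w j * x (i, j) * ((\<Sum>k\<in>I. x (k, j)) + x (i, j))" if "i \<in> I" and "j \<in> J" for i j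
  proof -
    have "(\<Sum>q\<in>I \<times> J. x (i, j) * column_coupling w (i, j) q * x q) =
        (\<Sum>k\<in>I. \<Sum>l\<in>J. if j = l then w j * x (i, j) * (if i = k then 2 else 1) * x (k, l) else 0)"
      unfolding sum.cartesian_product by (intro sum.cong refl) (auto simp: column_coupling_def)
    also have "\<dots> = (\<Sum>k\<in>I. w j * x (i, j) * (if i = k then 2 else 1) * x (k, j))"
      using assms(2) \<open>j \<in> J\<close> by simp
    also have "\<dots> = (\<Sum>k\<in>I. w j * x (i, j) * x (k, j) + (if k = i then w j * x (i, j) * x (k, j) else 0))"
      by (intro sum.cong refl) auto
    also have "\<dots> = w j * x (i, j) * ((\<Sum>k\<in>I. x (k, j)) + x (i, j))"
      using assms(1) \<open>i \<in> I\<close> by (simp add: sum.distrib sum_distrib_left distrib_left)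
    finally show ?thesis .
  qed
  have "(\<Sum>p\<in>I \<times> J. \<Sum>q\<in>I \<times> J. x p * column_coupling w p q * x q) =
      (\<Sum>j\<in>J. \<Sum>i\<in>I. w j * x (i, j) * ((\<Sum>k\<in>I. x (k, j)) + x (i, j)))"
  proof -
    have "(\<Sum>p\<in>I \<times> J. \<Sum>q\<in>I \<times> J. x p * column_coupling w p q * x q) =
        (\<Sum>i\<in>I. \<Sum>j\<in>J. \<Sum>q\<in>I \<times> J. x (i, j) * column_coupling w (i, j) q * x q)"
      by (rule sum.cartesian_product')
    then show ?thesis by (simp add: row sum.swap[of _ I J])
  qed
  also have "\<dots> = (\<Sum>j\<in>J. w j * ((\<Sum>i\<in>I. x (i, j))\<^sup>2 + (\<Sum>i\<in>I. (x (i, j))\<^sup>2)))"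
    by (intro sum.cong refl)
      (simp add: power2_eq_square distrib_left sum.distrib sum_distrib_left sum_distrib_right mult_ac)
  finally show ?thesis .
qed

lemma negative_definite_neg_column_coupling:
  assumes "finite I" and "finite J" and "\<forall>j\<in>J. 0 < w j"
  shows "negative_definite (I \<times> J) (\<lambda>p q. - column_coupling w p q)"
  unfolding negative_definite_def
proof (intro allI impI)
  fix x :: "'a \<times> 'b \<Rightarrow> real"
  assume "\<exists>p\<in>I \<times> J. x p \<noteq> 0"
  then obtain i0 j0 where "i0 \<in> I" "j0 \<in> J" "x (i0, j0) \<noteq> 0" by auto
  have "0 < (\<Sum>i\<in>I. (x (i, j0))\<^sup>2)"
    using assms(1) \<open>i0 \<in> I\<close> \<open>x (i0, j0) \<noteq> 0\<close> by (intro sum_pos2) auto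
  then have "0 < (\<Sum>j\<in>J. w j * ((\<Sum>i\<in>I. x (i, j))\<^sup>2 + (\<Sum>i\<in>I. (x (i, j))\<^sup>2)))"
    using assms \<open>j0 \<in> J\<close>
    by (intro sum_pos2[where i = j0])
      (auto intro!: mult_pos_pos add_nonneg_pos mult_nonneg_nonneg sum_nonneg add_nonneg_nonneg)
  then show "(\<Sum>p\<in>I \<times> J. \<Sum>q\<in>I \<times> J. x p * - column_coupling w p q * x q) < 0"
    using quadratic_form_column_coupling[OF assms(1,2), of x w]
    by (simp add: sum_negf)
qed

lemma upd_profile_apply:
  "upd_profile s k l t i j = s i j + (if i = k \<and> j = l then t - s k l else 0)"
  by (simp add: upd_profile_def)

lemma interest_rate_upd_profile:
  "interest_rate m d rmax rmin (upd_profile s k l t) j =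
     interest_rate m d rmax rmin s j
     - (rmax - rmin) / d j * (if k \<in> {1..m} \<and> l = j then t - s k l else 0)"
proof -
  have "(\<Sum>i=1..m. upd_profile s k l t i j)
      = (\<Sum>i=1..m. s i j) + (if k \<in> {1..m} \<and> l = j then t - s k l else 0)"
    by (cases "l = j") (simp_all add: upd_profile_apply sum.distrib sum.delta')
  then show ?thesis
    by (simp add: interest_rate_def diff_divide_distrib add_divide_distrib algebra_simps)
qed

lemma utility_upd_profile:
  assumes "i \<in> {1..m}" and "j \<in> {1..n}"
  shows "utility m n d rmax rmin (upd_profile s i j t) i =
     (\<Sum>j'\<in>{1..n} - {j}. (interest_rate m d rmax rmin s j' - rmin) * s i j')
     + (interest_rate m d rmax rmin s j - rmin - (rmax - rmin) / d j * (t - s i j)) * t"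
proof -
  have "utility m n d rmax rmin (upd_profile s i j t) i =
     (interest_rate m d rmax rmin (upd_profile s i j t) j - rmin) * t
     + (\<Sum>j'\<in>{1..n} - {j}. (interest_rate m d rmax rmin (upd_profile s i j t) j' - rmin)
                            * upd_profile s i j t i j')"
    unfolding utility_def using assms(2) by (simp add: sum.remove upd_profile_apply)
  also have "\<dots> = (interest_rate m d rmax rmin s j - rmin - (rmax - rmin) / d j * (t - s i j)) * t
     + (\<Sum>j'\<in>{1..n} - {j}. (interest_rate m d rmax rmin s j' - rmin) * s i j')"
    using assms(1) by (simp add: interest_rate_upd_profile upd_profile_apply)
  finally show ?thesis by simp
qed

lemma pseudo_gradient_eq:
  assumes "i \<in> {1..m}" and "j \<in> {1..n}"
  shows "pseudo_gradient m n d rmax rmin s (i, j) =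
     interest_rate m d rmax rmin s j - rmin - (rmax - rmin) / d j * s i j"
proof -
  \<comment> \<open>Naming the constant keeps the derivative rules from demanding d j \<noteq> 0.\<close>
  define b where "b = (rmax - rmin) / d j"
  have "((\<lambda>t. utility m n d rmax rmin (upd_profile s i j t) i) has_real_derivative
          interest_rate m d rmax rmin s j - rmin - b * s i j) (at (s i j))"
    unfolding utility_upd_profile[OF assms] b_def[symmetric]
    by (auto intro!: derivative_eq_intros simp: algebra_simps)
  then show ?thesis
    by (simp add: pseudo_gradient_def DERIV_imp_deriv b_def)
qed

lemma pg_jacobian_eq:
  assumes "i \<in> {1..m}" "j \<in> {1..n}" "k \<in> {1..m}" "l \<in> {1..n}"
  shows "pg_jacobian m n d rmax rmin s (i, j) (k, l) =
     - ((rmax - rmin) / d j) * ((if l = j then 1 else 0) + (if k = i \<and> l = j then 1 else 0))"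
proof -
  define b where "b = (rmax - rmin) / d j"
  have "((\<lambda>t. pseudo_gradient m n d rmax rmin (upd_profile s k l t) (i, j)) has_real_derivative
          - b * ((if l = j then 1 else 0) + (if k = i \<and> l = j then 1 else 0))) (at (s k l))"
    unfolding pseudo_gradient_eq[OF assms(1,2)] interest_rate_upd_profile upd_profile_apply
      b_def[symmetric]
    using assms(3) by (auto intro!: derivative_eq_intros)
  then show ?thesis
    by (simp add: pg_jacobian_def DERIV_imp_deriv b_def)
qed

lemma pg_jacobian_symmetrized:
  assumes "i \<in> {1..m}" "j \<in> {1..n}" "k \<in> {1..m}" "l \<in> {1..n}"
  shows "pg_jacobian m n d rmax rmin s (i, j) (k, l) + pg_jacobian m n d rmax rmin s (k, l) (i, j) =
     - column_coupling (\<lambda>j. 2 * ((rmax - rmin) / d j)) (i, j) (k, l)"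
proof (cases "l = j")
  case True
  then show ?thesis
    using assms by (simp add: pg_jacobian_eq column_coupling_def) (simp add: diff_divide_distrib)
next
  case False
  then show ?thesis
    using assms by (simp add: pg_jacobian_eq column_coupling_def)
qed

theorem proposition4p7:
  fixes m n :: nat and c d :: "nat \<Rightarrow> real" and rmax rmin :: real
    and s :: "nat \<Rightarrow> nat \<Rightarrow> real"
  assumes "interbank_game m n c d rmax rmin"
    and "s \<in> strategy_space m n c"
  shows "negative_definite ({1..m} \<times> {1..n})
           (\<lambda>p q. pg_jacobian m n d rmax rmin s p q + pg_jacobian m n d rmax rmin s q p)"
proof -
  \<comment> \<open>The Jacobian does not depend on s.\<close>
  let ?w = "\<lambda>j. 2 * ((rmax - rmin) / d j)"
  have "\<forall>j\<in>{1..n}. 0 < ?w j"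
    using assms(1) by (simp add: interbank_game_def)
  then have "negative_definite ({1..m} \<times> {1..n}) (\<lambda>p q. - column_coupling ?w p q)"
    by (intro negative_definite_neg_column_coupling) auto
  moreover have "negative_definite ({1..m} \<times> {1..n})
      (\<lambda>p q. pg_jacobian m n d rmax rmin s p q + pg_jacobian m n d rmax rmin s q p) \<longleftrightarrow>
    negative_definite ({1..m} \<times> {1..n}) (\<lambda>p q. - column_coupling ?w p q)"
    by (rule negative_definite_cong) (auto simp: pg_jacobian_symmetrized)
  ultimately show ?thesis
    by simp
qed

end
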